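(* Let $\nu\in\mathfrak{M}_L(\mathbb{R}^d)$. Then $\Upsilon^0(\nu)\in\mathfrak{M}_L^1(\mathbb{R}^d)$ if and only if $\nu\in\mathfrak{M}_L^1(\mathbb{R}^d)$.
   Context: A Lévy measure on $\mathbb{R}^d$ is a measure $\nu$ with $\nu(\{0\})=0$ and $\int(1\wedge|x|^2)\nu(\mathrm{d}x)<\infty$; their class is $\mathfrak{M}_L(\mathbb{R}^d)$, and $\mathfrak{M}_L^1(\mathbb{R}^d)$ is the class of those with $\int(1\wedge|x|)\nu(\mathrm{d}x)<\infty$. For $\nu\in\mathfrak{M}_L(\mathbb{R}^d)$, $\Upsilon^0(\nu)(B)=\int_0^\infty\nu(u^{-1}B)e^{-u}\mathrm{d}u$ for Borel $B$, where $u^{-1}B=\{u^{-1}x:x\in B\}$ (this is again in $\mathfrak{M}_L(\mathbb{R}^d)$). *)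

theory Defs
  imports "HOL-Analysis.Analysis"
begin

definition levy_measure :: "'a::euclidean_space measure \<Rightarrow> bool" where
  "levy_measure \<nu> \<longleftrightarrow> sets \<nu> = sets borel \<and> emeasure \<nu> {0} = 0 \<and>
     (\<integral>\<^sup>+ x. ennreal (min 1 (norm x ^ 2)) \<partial>\<nu>) < \<infinity>"

definition levy_measure1 :: "'a::euclidean_space measure \<Rightarrow> bool" where
  "levy_measure1 \<nu> \<longleftrightarrow> levy_measure \<nu> \<and>
     (\<integral>\<^sup>+ x. ennreal (min 1 (norm x)) \<partial>\<nu>) < \<infinity>"

definition Upsilon0 :: "'a::euclidean_space measure \<Rightarrow> 'a measure" where
  "Upsilon0 \<nu> = measure_of UNIV (sets borel)
     (\<lambda>B. \<integral>\<^sup>+ u. indicator {0<..} u * emeasure \<nu> ((\<lambda>x. inverse u *\<^sub>R x) ` B)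
              * ennreal (exp (- u)) \<partial>lborel)"

end

theory Submission
  imports Defs "HOL-Probability.Distributions"
begin

text \<open>Upsilon0(nu) is the image of e^(-u) du (on u > 0) times nu under (u, x) |-> u x, so
  int f dUpsilon0(nu) = int int_0^oo f(u x) e^(-u) du nu(dx); Fubini applies because
  int min(1, |x|^2) dnu < oo and nu{0} = 0 make nu sigma-finite. For f = min(1, |.|) the inner
  integral lies between e^(-2) min(1, |x|) (keep only u in [1, 2]) and min(1, |x|) (bound the
  integrand by 1, resp. u |x|, and use int_0^oo u^k e^(-u) du = k!), so the two integrals of
  min(1, |x|) are finite together. The same computation for min(1, |x|^2) and for the indicator
  of {0} shows that Upsilon0(nu) is again a Levy measure.\<close>

lemma ennreal_Ex_one_le_of_nat_mult: "(y::ennreal) \<noteq> 0 \<Longrightarrow> \<exists>n. 1 \<le> of_nat n * y"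
proof (cases y rule: ennreal_cases)
  case (real r)
  moreover assume "y \<noteq> 0"
  ultimately obtain n where "1 < of_nat n * r"
    using ex_less_of_nat_mult[of r 1] by auto
  then show ?thesis
    using real by (intro exI[of _ n]) (simp add: ennreal_of_nat_eq_real_of_nat flip: ennreal_mult)
qed (auto intro: exI[of _ 1])

lemma sigma_finite_measure_of_nn_integral_finite:
  fixes f :: "'a \<Rightarrow> ennreal"
  assumes [measurable]: "f \<in> borel_measurable M"
    and finite_integral: "(\<integral>\<^sup>+x. f x \<partial>M) < \<infinity>"
    and finite_zeros: "emeasure M {x\<in>space M. f x = 0} < \<infinity>"
  shows "sigma_finite_measure M"
proof
  define A where "A n = {x\<in>space M. 1 \<le> of_nat n * f x}" for n
  have A_finite: "emeasure M (A n) < \<infinity>" for n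
  proof -
    have "emeasure M (A n) \<le> of_nat n * (\<integral>\<^sup>+x. f x * indicator (space M) x \<partial>M)"
      unfolding A_def by (rule nn_integral_Markov_inequality) auto
    also have "\<dots> = of_nat n * (\<integral>\<^sup>+x. f x \<partial>M)"
      by (intro arg_cong2[where f="(*)"] nn_integral_cong) simp_all
    finally show ?thesis
      using finite_integral by (simp add: ennreal_mult_less_top order.strict_trans1 of_nat_less_top)
  qed
  define Z where "Z = {x\<in>space M. f x = 0}"
  have A_sets: "A n \<in> sets M" for n
    unfolding A_def by measurable
  have cover: "space M = Z \<union> (\<Union>n. A n)"
    using ennreal_Ex_one_le_of_nat_mult by (auto simp: A_def Z_def)
  show "\<exists>C. countable C \<and> C \<subseteq> sets M \<and> \<Union> C = space M \<and> (\<forall>c\<in>C. emeasure M c \<noteq> \<infinity>)"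
  proof (intro exI conjI)
    show "countable (insert Z (range A))" by simp
    show "insert Z (range A) \<subseteq> sets M"
      using A_sets by (auto simp: Z_def)
    show "\<Union> (insert Z (range A)) = space M"
      using cover by simp
    show "\<forall>c\<in>insert Z (range A). emeasure M c \<noteq> \<infinity>"
      using A_finite finite_zeros by (auto simp: Z_def dest: less_imp_neq)
  qed
qed

lemma levy_measure_sigma_finite:
  assumes "levy_measure \<nu>"
  shows "sigma_finite_measure \<nu>"
proof (rule sigma_finite_measure_of_nn_integral_finite[where f="\<lambda>x. ennreal (min 1 (norm x ^ 2))"])
  have sets[measurable_cong]: "sets \<nu> = sets borel"
    using assms by (simp add: levy_measure_def)
  show "(\<lambda>x. ennreal (min 1 (norm x ^ 2))) \<in> borel_measurable \<nu>"
    by measurable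
  show "(\<integral>\<^sup>+x. ennreal (min 1 (norm x ^ 2)) \<partial>\<nu>) < \<infinity>"
    using assms by (simp add: levy_measure_def)
  have "{x\<in>space \<nu>. ennreal (min 1 (norm x ^ 2)) = 0} = {0}"
    using sets_eq_imp_space_eq[OF sets] by (auto simp: min_def split: if_split_asm)
  then show "emeasure \<nu> {x\<in>space \<nu>. ennreal (min 1 (norm x ^ 2)) = 0} < \<infinity>"
    using assms by (simp add: levy_measure_def)
qed

definition exp_weight :: "real \<Rightarrow> ennreal" where
  "exp_weight u = indicator {0<..} u * ennreal (exp (- u))"

lemma borel_measurable_exp_weight[measurable]: "exp_weight \<in> borel_measurable borel"
  unfolding exp_weight_def by measurable

lemma exp_weight_pos: "u > 0 \<Longrightarrow> exp_weight u = ennreal (exp (- u))"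
  by (simp add: exp_weight_def)

lemma exp_weight_nonpos: "\<not> u > 0 \<Longrightarrow> exp_weight u = 0"
  by (simp add: exp_weight_def)

lemma exp_weight_mult_mono:
  assumes "u > 0 \<Longrightarrow> a \<le> b"
  shows "exp_weight u * ennreal a \<le> exp_weight u * ennreal b"
  by (cases "u > 0") (simp_all add: exp_weight_nonpos assms mult_left_mono ennreal_leI)

lemma nn_integral_exp_weight_power:
  assumes "c \<ge> 0"
  shows "(\<integral>\<^sup>+u. exp_weight u * ennreal (u ^ k * c) \<partial>lborel) = ennreal (c * fact k)"
proof -
  have "(\<integral>\<^sup>+u. exp_weight u * ennreal (u ^ k * c) \<partial>lborel)
      = (\<integral>\<^sup>+u. ennreal c * (ennreal (u ^ k * exp (- u)) * indicator {0..} u) \<partial>lborel)"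
    using AE_lborel_singleton[of 0]
    by (intro nn_integral_cong_AE, eventually_elim)
       (auto simp: exp_weight_def indicator_def assms mult_ac simp flip: ennreal_mult)
  also have "\<dots> = ennreal (c * fact k)"
    by (simp add: nn_integral_cmult nn_intergal_power_times_exp_Ici assms ennreal_mult)
  finally show ?thesis .
qed

lemma image_scaleR_inverse_eq_vimage:
  fixes a :: "'a::real_vector set"
  assumes "u \<noteq> 0"
  shows "(\<lambda>x. inverse u *\<^sub>R x) ` a = (\<lambda>x. u *\<^sub>R x) -` a"
  using assms by (force simp: image_iff)

definition exp_scale_mixture :: "'a::euclidean_space measure \<Rightarrow> 'a measure" where
  "exp_scale_mixture \<nu> =
     distr (density (lborel \<Otimes>\<^sub>M \<nu>) (\<lambda>z. exp_weight (fst z))) borel (\<lambda>z. fst z *\<^sub>R snd z)"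

lemma sets_exp_scale_mixture[simp, measurable_cong]: "sets (exp_scale_mixture \<nu>) = sets borel"
  by (simp add: exp_scale_mixture_def)

lemma nn_integral_exp_scale_mixture_pair:
  fixes \<nu> :: "'a::euclidean_space measure"
  assumes [measurable_cong]: "sets \<nu> = sets borel" and [measurable]: "f \<in> borel_measurable borel"
  shows "(\<integral>\<^sup>+y. f y \<partial>exp_scale_mixture \<nu>)
       = (\<integral>\<^sup>+z. exp_weight (fst z) * f (fst z *\<^sub>R snd z) \<partial>(lborel \<Otimes>\<^sub>M \<nu>))"
  unfolding exp_scale_mixture_def
  by (simp add: nn_integral_distr nn_integral_density)

lemma nn_integral_exp_scale_mixture:
  fixes \<nu> :: "'a::euclidean_space measure"
  assumes "sigma_finite_measure \<nu>" and [measurable_cong]: "sets \<nu> = sets borel"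
    and [measurable]: "f \<in> borel_measurable borel"
  shows "(\<integral>\<^sup>+y. f y \<partial>exp_scale_mixture \<nu>) = (\<integral>\<^sup>+x. \<integral>\<^sup>+u. exp_weight u * f (u *\<^sub>R x) \<partial>lborel \<partial>\<nu>)"
proof -
  interpret pair_sigma_finite lborel \<nu>
    using assms(1) by (intro pair_sigma_finite.intro) (simp_all add: lborel.sigma_finite_measure_axioms)
  have "(\<integral>\<^sup>+y. f y \<partial>exp_scale_mixture \<nu>)
      = (\<integral>\<^sup>+z. exp_weight (fst z) * f (fst z *\<^sub>R snd z) \<partial>(lborel \<Otimes>\<^sub>M \<nu>))"
    using assms(2,3) by (rule nn_integral_exp_scale_mixture_pair)
  also have "\<dots> = (\<integral>\<^sup>+u. \<integral>\<^sup>+x. exp_weight u * f (u *\<^sub>R x) \<partial>\<nu> \<partial>lborel)"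
    using M2.nn_integral_fst[of "\<lambda>z. exp_weight (fst z) * f (fst z *\<^sub>R snd z)"] by simp
  also have "\<dots> = (\<integral>\<^sup>+x. \<integral>\<^sup>+u. exp_weight u * f (u *\<^sub>R x) \<partial>lborel \<partial>\<nu>)"
    by (rule Fubini'[symmetric]) measurable
  finally show ?thesis .
qed

lemma Upsilon0_eq_exp_scale_mixture:
  fixes \<nu> :: "'a::euclidean_space measure"
  assumes "sigma_finite_measure \<nu>" and sets[measurable_cong]: "sets \<nu> = sets borel"
  shows "Upsilon0 \<nu> = exp_scale_mixture \<nu>"
proof -
  interpret \<nu>: sigma_finite_measure \<nu>
    by (fact assms(1))
  have "Upsilon0 \<nu> = measure_of UNIV (sets borel) (emeasure (exp_scale_mixture \<nu>))"
    unfolding Upsilon0_def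
  proof (rule measure_of_eq)
    fix a :: "'a set"
    assume "a \<in> sigma_sets UNIV (sets borel)"
    then have [measurable]: "a \<in> sets borel"
      by (metis sets.sigma_sets_eq space_borel)
    have slice: "(\<integral>\<^sup>+x. exp_weight u * indicator a (u *\<^sub>R x) \<partial>\<nu>)
        = indicator {0<..} u * emeasure \<nu> ((\<lambda>x. inverse u *\<^sub>R x) ` a) * ennreal (exp (- u))" for u
    proof (cases "u > 0")
      case True
      have "(\<lambda>x. u *\<^sub>R x) -` a \<in> sets \<nu>"
        using measurable_sets_borel[of "\<lambda>x. u *\<^sub>R x" borel a] by simp
      then have "(\<integral>\<^sup>+x. exp_weight u * indicator a (u *\<^sub>R x) \<partial>\<nu>)
          = exp_weight u * emeasure \<nu> ((\<lambda>x. u *\<^sub>R x) -` a)"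
        by (simp add: nn_integral_cmult_indicator flip: indicator_vimage)
      then show ?thesis
        using True by (simp add: image_scaleR_inverse_eq_vimage exp_weight_pos mult.commute)
    qed (simp add: exp_weight_nonpos)
    have "emeasure (exp_scale_mixture \<nu>) a
        = (\<integral>\<^sup>+z. exp_weight (fst z) * indicator a (fst z *\<^sub>R snd z) \<partial>(lborel \<Otimes>\<^sub>M \<nu>))"
      using sets by (simp flip: nn_integral_exp_scale_mixture_pair)
    also have "\<dots> = (\<integral>\<^sup>+u. \<integral>\<^sup>+x. exp_weight u * indicator a (u *\<^sub>R x) \<partial>\<nu> \<partial>lborel)"
      by (simp add: \<nu>.nn_integral_fst[symmetric])
    finally show "(\<integral>\<^sup>+u. indicator {0<..} u * emeasure \<nu> ((\<lambda>x. inverse u *\<^sub>R x) ` a)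
        * ennreal (exp (- u)) \<partial>lborel) = emeasure (exp_scale_mixture \<nu>) a"
      by (simp add: slice)
  qed simp
  also have "\<dots> = exp_scale_mixture \<nu>"
    using measure_of_of_measure[of "exp_scale_mixture \<nu>"] by (simp add: exp_scale_mixture_def)
  finally show ?thesis .
qed

lemma sets_Upsilon0[simp, measurable_cong]: "sets (Upsilon0 \<nu>) = sets borel"
  using sets.sigma_sets_eq[of borel] by (simp add: Upsilon0_def)

lemma nn_integral_Upsilon0:
  assumes "levy_measure \<nu>" and "f \<in> borel_measurable borel"
  shows "(\<integral>\<^sup>+y. f y \<partial>Upsilon0 \<nu>) = (\<integral>\<^sup>+x. \<integral>\<^sup>+u. exp_weight u * f (u *\<^sub>R x) \<partial>lborel \<partial>\<nu>)"
proof -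
  have \<nu>: "sigma_finite_measure \<nu>" "sets \<nu> = sets borel"
    using assms(1) by (simp_all add: levy_measure_sigma_finite levy_measure_def)
  show ?thesis
    unfolding Upsilon0_eq_exp_scale_mixture[OF \<nu>]
    using \<nu> assms(2) by (rule nn_integral_exp_scale_mixture)
qed

lemma exp_weight_integral_indicator_zero:
  fixes x :: "'a::real_vector"
  shows "(\<integral>\<^sup>+u. exp_weight u * indicator {0} (u *\<^sub>R x) \<partial>lborel) = indicator {0} x"
proof -
  have "(\<integral>\<^sup>+u. exp_weight u * indicator {0} (u *\<^sub>R x) \<partial>lborel)
      = (\<integral>\<^sup>+u. exp_weight u * ennreal (u ^ 0 * indicator {0} x) \<partial>lborel)"
    by (intro nn_integral_cong) (auto simp: exp_weight_nonpos indicator_def)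
  also have "\<dots> = ennreal (indicator {0} x * fact 0)"
    by (rule nn_integral_exp_weight_power) simp
  finally show ?thesis
    by (simp add: indicator_def)
qed

lemma exp_weight_integral_min_norm_le:
  fixes x :: "'a::real_normed_vector"
  shows "(\<integral>\<^sup>+u. exp_weight u * ennreal (min 1 (norm (u *\<^sub>R x))) \<partial>lborel) \<le> ennreal (min 1 (norm x))"
proof (cases "norm x \<ge> 1")
  case True
  have "(\<integral>\<^sup>+u. exp_weight u * ennreal (min 1 (norm (u *\<^sub>R x))) \<partial>lborel)
      \<le> (\<integral>\<^sup>+u. exp_weight u * ennreal (u ^ 0 * 1) \<partial>lborel)"
    by (intro nn_integral_mono exp_weight_mult_mono) simp
  also have "\<dots> = ennreal (1 * fact 0)"
    by (rule nn_integral_exp_weight_power) simp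
  finally show ?thesis
    using True by simp
next
  case False
  have "(\<integral>\<^sup>+u. exp_weight u * ennreal (min 1 (norm (u *\<^sub>R x))) \<partial>lborel)
      \<le> (\<integral>\<^sup>+u. exp_weight u * ennreal (u ^ 1 * norm x) \<partial>lborel)"
    by (intro nn_integral_mono exp_weight_mult_mono) simp
  also have "\<dots> = ennreal (norm x * fact 1)"
    by (rule nn_integral_exp_weight_power) simp
  finally show ?thesis
    using False by simp
qed

lemma exp_weight_integral_min_norm_sq_le:
  fixes x :: "'a::real_normed_vector"
  shows "(\<integral>\<^sup>+u. exp_weight u * ennreal (min 1 (norm (u *\<^sub>R x) ^ 2)) \<partial>lborel)
    \<le> 2 * ennreal (min 1 (norm x ^ 2))"
proof (cases "norm x \<ge> 1")
  case True
  have "(\<integral>\<^sup>+u. exp_weight u * ennreal (min 1 (norm (u *\<^sub>R x) ^ 2)) \<partial>lborel)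
      \<le> (\<integral>\<^sup>+u. exp_weight u * ennreal (u ^ 0 * 1) \<partial>lborel)"
    by (intro nn_integral_mono exp_weight_mult_mono) simp
  also have "\<dots> = ennreal (1 * fact 0)"
    by (rule nn_integral_exp_weight_power) simp
  also have "\<dots> \<le> 2 * ennreal (min 1 (norm x ^ 2))"
    using True by (simp add: min_def one_le_power)
  finally show ?thesis .
next
  case False
  have "(\<integral>\<^sup>+u. exp_weight u * ennreal (min 1 (norm (u *\<^sub>R x) ^ 2)) \<partial>lborel)
      \<le> (\<integral>\<^sup>+u. exp_weight u * ennreal (u ^ 2 * norm x ^ 2) \<partial>lborel)"
    by (intro nn_integral_mono exp_weight_mult_mono) (simp add: power_mult_distrib)
  also have "\<dots> = ennreal (norm x ^ 2 * fact 2)"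
    by (rule nn_integral_exp_weight_power) simp
  also have "\<dots> = 2 * ennreal (min 1 (norm x ^ 2))"
    using False by (simp add: power_le_one ennreal_mult mult.commute)
  finally show ?thesis .
qed

lemma exp_weight_integral_min_norm_ge:
  fixes x :: "'a::real_normed_vector"
  shows "ennreal (exp (-2) * min 1 (norm x))
    \<le> (\<integral>\<^sup>+u. exp_weight u * ennreal (min 1 (norm (u *\<^sub>R x))) \<partial>lborel)"
proof -
  have "exp_weight u * ennreal (min 1 (norm (u *\<^sub>R x))) \<ge> ennreal (exp (-2) * min 1 (norm x))"
    if "u \<in> {1..2}" for u
  proof -
    have "norm x \<le> norm (u *\<^sub>R x)"
      using that by (simp add: mult_le_cancel_right1)
    then have "exp (-2) * min 1 (norm x) \<le> exp (- u) * min 1 (norm (u *\<^sub>R x))"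
      using that by (intro mult_mono min.mono) auto
    then show ?thesis
      using that by (simp add: exp_weight_pos ennreal_leI flip: ennreal_mult)
  qed
  then have "(\<integral>\<^sup>+u. ennreal (exp (-2) * min 1 (norm x)) * indicator {1..2::real} u \<partial>lborel)
      \<le> (\<integral>\<^sup>+u. exp_weight u * ennreal (min 1 (norm (u *\<^sub>R x))) \<partial>lborel)"
    by (intro nn_integral_mono) (simp split: split_indicator)
  then show ?thesis
    by (simp add: nn_integral_cmult_indicator)
qed

lemma levy_measure_Upsilon0:
  assumes "levy_measure \<nu>"
  shows "levy_measure (Upsilon0 \<nu>)"
proof -
  have [measurable_cong]: "sets \<nu> = sets borel"
    using assms by (simp add: levy_measure_def)
  have "emeasure (Upsilon0 \<nu>) {0} = (\<integral>\<^sup>+x. \<integral>\<^sup>+u. exp_weight u * indicator {0} (u *\<^sub>R x) \<partial>lborel \<partial>\<nu>)"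
    by (simp add: nn_integral_Upsilon0[OF assms] flip: nn_integral_indicator)
  also have "\<dots> = emeasure \<nu> {0}"
    by (simp add: exp_weight_integral_indicator_zero)
  finally have "emeasure (Upsilon0 \<nu>) {0} = 0"
    using assms by (simp add: levy_measure_def)
  have "(\<integral>\<^sup>+y. ennreal (min 1 (norm y ^ 2)) \<partial>Upsilon0 \<nu>)
      = (\<integral>\<^sup>+x. \<integral>\<^sup>+u. exp_weight u * ennreal (min 1 (norm (u *\<^sub>R x) ^ 2)) \<partial>lborel \<partial>\<nu>)"
    by (rule nn_integral_Upsilon0[OF assms]) measurable
  also have "\<dots> \<le> (\<integral>\<^sup>+x. 2 * ennreal (min 1 (norm x ^ 2)) \<partial>\<nu>)"
    by (intro nn_integral_mono exp_weight_integral_min_norm_sq_le)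
  also have "\<dots> = 2 * (\<integral>\<^sup>+x. ennreal (min 1 (norm x ^ 2)) \<partial>\<nu>)"
    by (rule nn_integral_cmult) measurable
  also have "\<dots> < \<infinity>"
    using assms by (simp add: levy_measure_def ennreal_mult_less_top)
  finally show ?thesis
    using \<open>emeasure (Upsilon0 \<nu>) {0} = 0\<close> by (simp add: levy_measure_def)
qed

lemma nn_integral_min_norm_Upsilon0:
  assumes "levy_measure \<nu>"
  shows "(\<integral>\<^sup>+y. ennreal (min 1 (norm y)) \<partial>Upsilon0 \<nu>) \<le> (\<integral>\<^sup>+x. ennreal (min 1 (norm x)) \<partial>\<nu>)"
    and "ennreal (exp (-2)) * (\<integral>\<^sup>+x. ennreal (min 1 (norm x)) \<partial>\<nu>)
      \<le> (\<integral>\<^sup>+y. ennreal (min 1 (norm y)) \<partial>Upsilon0 \<nu>)"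
proof -
  have [measurable_cong]: "sets \<nu> = sets borel"
    using assms by (simp add: levy_measure_def)
  have eq: "(\<integral>\<^sup>+y. ennreal (min 1 (norm y)) \<partial>Upsilon0 \<nu>)
      = (\<integral>\<^sup>+x. \<integral>\<^sup>+u. exp_weight u * ennreal (min 1 (norm (u *\<^sub>R x))) \<partial>lborel \<partial>\<nu>)"
    by (rule nn_integral_Upsilon0[OF assms]) measurable
  show "(\<integral>\<^sup>+y. ennreal (min 1 (norm y)) \<partial>Upsilon0 \<nu>) \<le> (\<integral>\<^sup>+x. ennreal (min 1 (norm x)) \<partial>\<nu>)"
    unfolding eq by (intro nn_integral_mono exp_weight_integral_min_norm_le)
  have "ennreal (exp (-2)) * (\<integral>\<^sup>+x. ennreal (min 1 (norm x)) \<partial>\<nu>)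
      = (\<integral>\<^sup>+x. ennreal (exp (-2) * min 1 (norm x)) \<partial>\<nu>)"
    by (subst nn_integral_cmult[symmetric]) (simp_all add: ennreal_mult)
  also have "\<dots> \<le> (\<integral>\<^sup>+y. ennreal (min 1 (norm y)) \<partial>Upsilon0 \<nu>)"
    unfolding eq by (intro nn_integral_mono exp_weight_integral_min_norm_ge)
  finally show "ennreal (exp (-2)) * (\<integral>\<^sup>+x. ennreal (min 1 (norm x)) \<partial>\<nu>)
      \<le> (\<integral>\<^sup>+y. ennreal (min 1 (norm y)) \<partial>Upsilon0 \<nu>)" .
qed

theorem proposition3p3:
  fixes \<nu> :: "'a::euclidean_space measure"
  assumes "levy_measure \<nu>"
  shows "levy_measure1 (Upsilon0 \<nu>) \<longleftrightarrow> levy_measure1 \<nu>"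
proof -
  let ?I = "\<lambda>\<mu>. \<integral>\<^sup>+x. ennreal (min 1 (norm x)) \<partial>\<mu>"
  have "?I (Upsilon0 \<nu>) < \<infinity> \<longleftrightarrow> ?I \<nu> < \<infinity>"
  proof
    assume "?I (Upsilon0 \<nu>) < \<infinity>"
    then have "ennreal (exp (-2)) * ?I \<nu> < \<infinity>"
      using nn_integral_min_norm_Upsilon0(2)[OF assms] by (rule le_less_trans[rotated])
    then show "?I \<nu> < \<infinity>"
      by (auto simp: ennreal_mult_less_top)
  qed (use nn_integral_min_norm_Upsilon0(1)[OF assms] in \<open>rule le_less_trans\<close>)
  then show ?thesis
    using assms levy_measure_Upsilon0[OF assms] by (simp add: levy_measure1_def)
qed

end
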